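(* Let $\mathcal{G}=(V,E)$ be a hypergraph on $n$ vertices. Then for every nonempty $S\subset V$, $$(r(\mathcal{G})-1)\frac{\lambda_n(L_{\mathcal{G}})\,|S|\,|V\setminus S|}{n}\ \ge\ |\partial S|\ \ge\ \frac{cr(\mathcal{G})-1}{\lfloor r(\mathcal{G})^2/4\rfloor}\,\frac{\lambda_2(L_{\mathcal{G}})\,|S|\,|V\setminus S|}{n}.$$
   Context: A hypergraph $\mathcal{G}=(V,E)$ has a finite vertex set $V$ and a set $E$ of subsets of $V$ (edges), each of cardinality at least $2$. The rank $r(\mathcal{G})$ and co-rank $cr(\mathcal{G})$ are the maximum and minimum edge cardinalities. The degree $d_i$ is the number of edges containing $i$. The Laplacian $L_{\mathcal{G}}$ is the matrix with $(L_{\mathcal{G}})_{ii}=d_i$ and $(L_{\mathcal{G}})_{ij}=-\sum_{e\in E,\, i,j\in e}\frac{1}{|e|-1}$ for $i\ne j$; its eigenvalues are $\lambda_1(L_{\mathcal{G}})\le\dots\le\lambda_n(L_{\mathcal{G}})$. The edge boundary $\partial S$ is the set of edges containing a vertex of $S$ and a vertex of $V\setminus S$. *)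

theory Defs
  imports "Jordan_Normal_Form.Char_Poly" "HOL-Library.Multiset"
begin

definition hypergraph :: "nat \<Rightarrow> nat set set \<Rightarrow> bool" where
  "hypergraph n E \<longleftrightarrow> (\<forall>e\<in>E. e \<subseteq> {0..<n} \<and> card e \<ge> 2)"

definition hrank :: "nat set set \<Rightarrow> nat" where
  "hrank E = Max (card ` E)"

definition hcorank :: "nat set set \<Rightarrow> nat" where
  "hcorank E = Min (card ` E)"

definition hdegree :: "nat set set \<Rightarrow> nat \<Rightarrow> nat" where
  "hdegree E i = card {e\<in>E. i \<in> e}"

definition hlaplacian :: "nat \<Rightarrow> nat set set \<Rightarrow> real mat" where
  "hlaplacian n E = mat n n (\<lambda>(i,j). if i = j then real (hdegree E i)
      else - (\<Sum>e\<in>{e\<in>E. i \<in> e \<and> j \<in> e}. 1 / (real (card e) - 1)))"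

(* k-th smallest eigenvalue (1-indexed), counted with multiplicity, as roots of the
   characteristic polynomial *)
definition eigval :: "real mat \<Rightarrow> nat \<Rightarrow> real" where
  "eigval A k = sorted_list_of_multiset (proots (char_poly A)) ! (k - 1)"

definition edge_boundary :: "nat \<Rightarrow> nat set set \<Rightarrow> nat set \<Rightarrow> nat set set" where
  "edge_boundary n E S = {e\<in>E. e \<inter> S \<noteq> {} \<and> e \<inter> ({0..<n} - S) \<noteq> {}}"

end

theory Submission
  imports Defs "Jordan_Normal_Form.Schur_Decomposition"
begin

text \<open>Test the Laplacian against the cut vector \<open>x\<close>, equal to \<open>|V - S|\<close> on \<open>S\<close> and to
  \<open>-|S|\<close> off \<open>S\<close>. It is orthogonal to the all-ones vector, which spans part of the kernel
  of the positive semidefinite Laplacian, and \<open>|x|\<^sup>2 = |S| |V - S| n\<close>; so the Rayleigh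
  quotient of \<open>x\<close> lies between \<open>\<lambda>\<^sub>2\<close> and \<open>\<lambda>\<^sub>n\<close>. Edge by edge, the quadratic form is
  \<open>x\<^sup>T L x = n\<^sup>2 \<Sum>\<^sub>e |e \<inter> S| |e - S| / (|e| - 1)\<close>. An edge contributes zero unless it lies
  in \<open>\<partial>S\<close>, and a boundary edge contributes between \<open>1\<close> and \<open>\<lfloor>r\<^sup>2/4\<rfloor> / (cr - 1)\<close>, since
  \<open>a + b - 1 \<le> a b \<le> \<lfloor>(a + b)\<^sup>2/4\<rfloor>\<close> for \<open>a, b \<ge> 1\<close>.\<close>

section \<open>Spectral theorem for real symmetric matrices\<close>

lemma scalar_prod_self_nonneg: "(v :: real vec) \<bullet> v \<ge> 0"
  unfolding scalar_prod_def by (intro sum_nonneg) auto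

lemma scalar_prod_self_eq_sum_squares:
  "(v :: real vec) \<in> carrier_vec n \<Longrightarrow> v \<bullet> v = (\<Sum>i<n. (v $ i)^2)"
  unfolding scalar_prod_def by (auto simp: power2_eq_square atLeast0LessThan)

lemma real_symmetric_complex_eigenvalue_real:
  fixes A :: "real mat"
  assumes A: "A \<in> carrier_mat n n" and sym: "transpose_mat A = A"
    and ev: "eigenvector (map_mat complex_of_real A) v l"
  shows "l \<in> \<real>"
proof -
  define Ac where "Ac = map_mat complex_of_real A"
  have Ac: "Ac \<in> carrier_mat n n" using A by (simp add: Ac_def)
  have v: "v \<in> carrier_vec n" "v \<noteq> 0\<^sub>v n" and Av: "Ac *\<^sub>v v = l \<cdot>\<^sub>v v"
    using ev Ac unfolding eigenvector_def Ac_def by auto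
  have Aij: "Ac $$ (i,j) = of_real (A $$ (i,j))" "A $$ (j,i) = A $$ (i,j)"
    if "i < n" "j < n" for i j
    using that A arg_cong[OF sym, of "\<lambda>M. M $$ (i,j)"] by (auto simp: Ac_def)
  \<comment> \<open>\<open>l\<close> is the quotient of \<open>v\<^sup>* A v\<close> by \<open>v\<^sup>* v\<close>, both of which are real.\<close>
  define s where "s = (\<Sum>i<n. \<Sum>j<n. cnj (v $ i) * Ac $$ (i,j) * v $ j)"
  define N where "N = (\<Sum>i<n. cnj (v $ i) * v $ i)"
  have "s = (\<Sum>i<n. cnj (v $ i) * (Ac *\<^sub>v v) $ i)"
    unfolding s_def using Ac v
    by (intro sum.cong refl) (simp add: scalar_prod_def atLeast0LessThan sum_distrib_left mult.assoc)
  also have "\<dots> = l * N"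
    unfolding N_def Av using v by (simp add: sum_distrib_left mult_ac)
  finally have sN: "s = l * N" .
  have "cnj s = (\<Sum>i<n. \<Sum>j<n. v $ i * Ac $$ (i,j) * cnj (v $ j))"
    unfolding s_def by (simp add: Aij)
  also have "\<dots> = (\<Sum>j<n. \<Sum>i<n. v $ i * Ac $$ (i,j) * cnj (v $ j))"
    by (rule sum.swap)
  also have "\<dots> = s"
    unfolding s_def by (intro sum.cong refl) (simp add: Aij mult_ac)
  finally have s_real: "cnj s = s" .
  obtain i where i: "i < n" "v $ i \<noteq> 0"
    using v by (metis eq_vecI carrier_vecD index_zero_vec)
  have "(\<Sum>i<n. (cmod (v $ i))^2) > 0"
    using i by (intro sum_pos2[of _ i]) auto
  moreover have "N = of_real (\<Sum>i<n. (cmod (v $ i))^2)"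
    unfolding N_def of_real_sum by (intro sum.cong refl) (metis complex_norm_square mult.commute)
  ultimately obtain r where N: "N = of_real r" "r > 0" by blast
  then have "cnj l = l" using sN s_real by (metis complex_cnj_divide complex_cnj_complex_of_real
      nonzero_mult_div_cancel_right of_real_eq_0_iff less_irrefl)
  then show ?thesis by (simp add: Reals_cnj_iff)
qed

lemma real_symmetric_char_poly_has_root:
  fixes A :: "real mat"
  assumes A: "A \<in> carrier_mat n n" and sym: "transpose_mat A = A" and n: "n > 0"
  shows "\<exists>e. poly (char_poly A) e = 0"
proof -
  define Ac where "Ac = map_mat complex_of_real A"
  have Ac: "Ac \<in> carrier_mat n n" using A by (simp add: Ac_def)
  have cp: "char_poly Ac = map_poly of_real (char_poly A)"
    using of_real_hom.char_poly_hom[OF A] by (simp add: Ac_def)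
  obtain as where as: "char_poly Ac = (\<Prod>a\<leftarrow>as. [:- a, 1:])" "length as = n"
    using char_poly_factorized[OF Ac] by blast
  have "poly (char_poly Ac) (as ! 0) = 0"
    unfolding as(1) using as(2) n by (auto simp: poly_prod_list prod_list_zero_iff)
  then have "eigenvalue Ac (as ! 0)" using eigenvalue_root_char_poly[OF Ac] by simp
  then obtain v where "eigenvector Ac v (as ! 0)" unfolding eigenvalue_def by blast
  then have "as ! 0 \<in> \<real>"
    using real_symmetric_complex_eigenvalue_real[OF A sym] by (simp add: Ac_def)
  then obtain e where e: "as ! 0 = of_real e" by (auto elim: Reals_cases)
  have "poly (map_poly of_real (char_poly A)) (of_real e) = (0::complex)"
    using \<open>poly (char_poly Ac) (as ! 0) = 0\<close> cp e by simp
  then show ?thesis by auto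
qed

lemma real_symmetric_unit_eigenvector:
  fixes A :: "real mat"
  assumes A: "A \<in> carrier_mat n n" and sym: "transpose_mat A = A" and n: "n > 0"
  shows "\<exists>v e. v \<in> carrier_vec n \<and> v \<bullet> v = 1 \<and> A *\<^sub>v v = e \<cdot>\<^sub>v v"
proof -
  obtain e where "poly (char_poly A) e = 0"
    using real_symmetric_char_poly_has_root[OF A sym n] by auto
  then obtain u where "eigenvector A u e"
    using eigenvalue_root_char_poly[OF A] unfolding eigenvalue_def by blast
  then have u: "u \<in> carrier_vec n" "u \<noteq> 0\<^sub>v n" and Au: "A *\<^sub>v u = e \<cdot>\<^sub>v u"
    using A unfolding eigenvector_def by auto
  have upos: "u \<bullet> u > 0"
    using u conjugate_square_eq_0_vec[OF u(1)] scalar_prod_self_nonneg[of u] by auto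
  define v where "v = (1 / sqrt (u \<bullet> u)) \<cdot>\<^sub>v u"
  have "v \<in> carrier_vec n" "v \<bullet> v = 1" "A *\<^sub>v v = e \<cdot>\<^sub>v v"
    using u upos Au A
    by (auto simp: v_def real_sqrt_mult[symmetric] mult_mat_vec smult_smult_assoc mult.commute)
  then show ?thesis by blast
qed

lemma orthonormal_basis_extension:
  fixes v :: "real vec"
  assumes v: "v \<in> carrier_vec n" and vv: "v \<bullet> v = 1" and n: "n > 0"
  shows "\<exists>ws. set ws \<subseteq> carrier_vec n \<and> length ws = n \<and> ws ! 0 = v \<and>
     (\<forall>i<n. \<forall>j<n. ws ! i \<bullet> ws ! j = (if i = j then 1 else 0))"
proof -
  interpret cof_vec_space n "TYPE(real)" .
  have v0: "v \<noteq> 0\<^sub>v n" using vv v by auto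
  define b where "b = basis_completion v"
  from basis_completion[OF v v0, folded b_def]
  have dist_b: "distinct b" and indep: "\<not> lin_dep (set b)" and b: "set b \<subseteq> carrier_vec n"
    and hdb: "hd b = v" and len_b: "length b = n" by auto
  from hdb len_b n obtain vs where bv: "b = v # vs" by (cases b) auto
  define us where "us = gram_schmidt n b"
  from gram_schmidt_result[OF b dist_b indep refl, folded us_def]
  have us: "set us \<subseteq> carrier_vec n" "corthogonal us" "length us = n"
    by (auto simp: len_b)
  have us0: "us ! 0 = v"
    using gram_schmidt_hd[OF v, of vs, folded bv us_def] us(3) n by (cases us) auto
  have orth: "us ! i \<bullet> us ! j = 0 \<longleftrightarrow> i \<noteq> j" if "i < n" "j < n" for i j
    using corthogonalD[OF us(2), of i j] that us(3) by simp
  have pos: "us ! i \<bullet> us ! i > 0" if "i < n" for i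
    using orth[OF that that] scalar_prod_self_nonneg[of "us ! i"] by linarith
  have car: "us ! i \<in> carrier_vec n" if "i < n" for i using us that by auto
  define ws where "ws = map (\<lambda>u. (1 / sqrt (u \<bullet> u)) \<cdot>\<^sub>v u) us"
  have "ws ! i \<bullet> ws ! j = (if i = j then 1 else 0)" if ij: "i < n" "j < n" for i j
  proof -
    have "ws ! i \<bullet> ws ! j = (us ! i \<bullet> us ! j) / (sqrt (us ! i \<bullet> us ! i) * sqrt (us ! j \<bullet> us ! j))"
      using ij us(3) car[OF ij(1)] car[OF ij(2)] by (simp add: ws_def)
    then show ?thesis
      using orth[OF ij] pos[OF ij(1)] by (auto simp: real_sqrt_mult[symmetric])
  qed
  moreover have "set ws \<subseteq> carrier_vec n" "length ws = n" "ws ! 0 = v"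
    using us us0 vv n by (auto simp: ws_def)
  ultimately show ?thesis by blast
qed

definition orthonormal_mat :: "nat \<Rightarrow> 'a :: comm_ring_1 mat \<Rightarrow> bool" where
  "orthonormal_mat n Q \<longleftrightarrow>
     Q \<in> carrier_mat n n \<and> transpose_mat Q * Q = 1\<^sub>m n \<and> Q * transpose_mat Q = 1\<^sub>m n"

lemma orthonormal_mat_mult:
  assumes P: "orthonormal_mat n P" and Q: "orthonormal_mat n Q"
  shows "orthonormal_mat n (P * Q)"
proof -
  have car: "P \<in> carrier_mat n n" "Q \<in> carrier_mat n n"
    using P Q by (auto simp: orthonormal_mat_def)
  have t: "transpose_mat (P * Q) = transpose_mat Q * transpose_mat P"
    using car by (simp add: transpose_mult)
  have "transpose_mat (P * Q) * (P * Q) = transpose_mat Q * (transpose_mat P * P) * Q"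
    unfolding t using car by (simp add: assoc_mult_mat[of _ n n _ n _ n])
  moreover have "P * Q * transpose_mat (P * Q) = P * (Q * transpose_mat Q) * transpose_mat P"
    unfolding t using car by (simp add: assoc_mult_mat[of _ n n _ n _ n])
  ultimately show ?thesis using P Q car by (simp add: orthonormal_mat_def)
qed

lemma orthonormal_mat_one_block:
  assumes Q: "orthonormal_mat m Q"
  shows "orthonormal_mat (Suc m) (four_block_mat (1\<^sub>m 1) (0\<^sub>m 1 m) (0\<^sub>m m 1) Q)"
proof -
  have car: "Q \<in> carrier_mat m m" using Q by (simp add: orthonormal_mat_def)
  have t: "transpose_mat (four_block_mat (1\<^sub>m 1) (0\<^sub>m 1 m) (0\<^sub>m m 1) Q)
      = four_block_mat (1\<^sub>m 1) (0\<^sub>m 1 m) (0\<^sub>m m 1) (transpose_mat Q)"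
    using car by (subst transpose_four_block_mat) auto
  show ?thesis
    unfolding orthonormal_mat_def t using car Q
    by (auto simp: orthonormal_mat_def mult_four_block_mat[of _ 1 1 _ m _ m _ _ 1 _ m])
qed

lemma orthonormal_mat_with_first_col:
  fixes v :: "real vec"
  assumes v: "v \<in> carrier_vec n" and vv: "v \<bullet> v = 1" and n: "n > 0"
  shows "\<exists>W. orthonormal_mat n W \<and> col W 0 = v"
proof -
  obtain ws where ws: "set ws \<subseteq> carrier_vec n" "length ws = n" "ws ! 0 = v"
    "\<And>i j. i < n \<Longrightarrow> j < n \<Longrightarrow> ws ! i \<bullet> ws ! j = (if i = j then 1 else 0)"
    using orthonormal_basis_extension[OF v vv n] by blast
  define W where "W = mat_of_cols n ws"
  have W: "W \<in> carrier_mat n n" using ws mat_of_cols_carrier(1)[of n ws] by (simp add: W_def)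
  have colW: "col W j = ws ! j" if "j < n" for j
  proof -
    have "ws ! j \<in> carrier_vec n" using that ws(1,2) by auto
    then show ?thesis using that ws(2) by (simp add: W_def)
  qed
  have WtW: "transpose_mat W * W = 1\<^sub>m n"
    by (rule eq_matI) (use W in \<open>auto simp: colW ws(4)\<close>)
  moreover have "W * transpose_mat W = 1\<^sub>m n"
    using mat_mult_left_right_inverse[OF _ W WtW] W by simp
  ultimately show ?thesis using W colW[of 0] ws(3) n by (auto simp: orthonormal_mat_def)
qed

lemma real_symmetric_deflation:
  fixes A :: "real mat"
  assumes A: "A \<in> carrier_mat (Suc m) (Suc m)" and sym: "transpose_mat A = A"
    and v: "v \<in> carrier_vec (Suc m)" and vv: "v \<bullet> v = 1" and Av: "A *\<^sub>v v = e \<cdot>\<^sub>v v"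
  shows "\<exists>W A3. orthonormal_mat (Suc m) W \<and> A3 \<in> carrier_mat m m \<and> transpose_mat A3 = A3 \<and>
     transpose_mat W * A * W = four_block_mat (mat 1 1 (\<lambda>_. e)) (0\<^sub>m 1 m) (0\<^sub>m m 1) A3"
proof -
  let ?n = "Suc m"
  obtain W where W: "orthonormal_mat ?n W" and W0: "col W 0 = v"
    using orthonormal_mat_with_first_col[OF v vv] by blast
  have Wc: "W \<in> carrier_mat ?n ?n" and WtW: "transpose_mat W * W = 1\<^sub>m ?n"
    using W by (auto simp: orthonormal_mat_def)
  define A' where "A' = transpose_mat W * A * W"
  have A': "A' \<in> carrier_mat ?n ?n" using A Wc by (simp add: A'_def)
  have A'sym: "transpose_mat A' = A'"
    unfolding A'_def using A Wc sym
    by (simp add: transpose_mult[of _ ?n ?n _ ?n] assoc_mult_mat[of _ ?n ?n _ ?n _ ?n])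
  have A'ij: "A' $$ (i,j) = col W i \<bullet> (A *\<^sub>v col W j)" if "i < ?n" "j < ?n" for i j
  proof -
    have "A' = transpose_mat W * (A * W)" using A Wc by (simp add: A'_def)
    then have "A' $$ (i,j) = row (transpose_mat W) i \<bullet> col (A * W) j" using that A Wc by simp
    also have "row (transpose_mat W) i = col W i" using that Wc by simp
    also have "col (A * W) j = A *\<^sub>v col W j" using col_mult2[OF A Wc, of j] that by simp
    finally show ?thesis .
  qed
  have WtW_ij: "col W i \<bullet> col W j = (if i = j then 1 else 0)" if "i < ?n" "j < ?n" for i j
    using arg_cong[OF WtW, of "\<lambda>M. M $$ (i,j)"] that Wc by simp
  have col0: "A' $$ (i,0) = (if i = 0 then e else 0)" if "i < ?n" for i
    using A'ij[OF that, of 0] Av W0 WtW_ij[OF that, of 0] v Wc that by simp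
  have row0: "A' $$ (0,j) = (if j = 0 then e else 0)" if "j < ?n" for j
    using arg_cong[OF A'sym, of "\<lambda>M. M $$ (j,0)"] col0[OF that] A' that by simp
  define A3 where "A3 = mat m m (\<lambda>(i,j). A' $$ (Suc i, Suc j))"
  have "transpose_mat A3 = A3"
  proof (rule eq_matI)
    fix i j assume "i < dim_row A3" "j < dim_col A3"
    then show "transpose_mat A3 $$ (i, j) = A3 $$ (i, j)"
      using arg_cong[OF A'sym, of "\<lambda>M. M $$ (Suc i, Suc j)"] A' by (simp add: A3_def)
  qed (auto simp: A3_def)
  moreover have "A' = four_block_mat (mat 1 1 (\<lambda>_. e)) (0\<^sub>m 1 m) (0\<^sub>m m 1) A3"
  proof (rule eq_matI)
    fix i j assume "i < dim_row (four_block_mat (mat 1 1 (\<lambda>_. e)) (0\<^sub>m 1 m) (0\<^sub>m m 1) A3)"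
      "j < dim_col (four_block_mat (mat 1 1 (\<lambda>_. e)) (0\<^sub>m 1 m) (0\<^sub>m m 1) A3)"
    then show "A' $$ (i, j) = four_block_mat (mat 1 1 (\<lambda>_. e)) (0\<^sub>m 1 m) (0\<^sub>m m 1) A3 $$ (i, j)"
      using col0 row0 by (cases i; cases j) (auto simp: A3_def)
  qed (use A' in \<open>auto simp: A3_def\<close>)
  ultimately show ?thesis
    using W by (intro exI[of _ W] exI[of _ A3]) (auto simp: A'_def A3_def)
qed

theorem real_symmetric_spectral:
  fixes A :: "real mat"
  assumes "A \<in> carrier_mat n n" and "transpose_mat A = A"
  shows "\<exists>Q D. orthonormal_mat n Q \<and> D \<in> carrier_mat n n \<and> diagonal_mat D \<and>
     A = Q * D * transpose_mat Q"
  using assms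
proof (induction n arbitrary: A)
  case 0
  then show ?case
    by (intro exI[of _ "1\<^sub>m 0"] exI[of _ A]) (auto simp: orthonormal_mat_def diagonal_mat_def)
next
  case (Suc m A)
  let ?n = "Suc m"
  have A: "A \<in> carrier_mat ?n ?n" and sym: "transpose_mat A = A" by fact+
  obtain v e where v: "v \<in> carrier_vec ?n" and vv: "v \<bullet> v = 1" and Av: "A *\<^sub>v v = e \<cdot>\<^sub>v v"
    using real_symmetric_unit_eigenvector[OF A sym zero_less_Suc] by blast
  obtain W A3 where W: "orthonormal_mat ?n W" and A3: "A3 \<in> carrier_mat m m"
    and A3sym: "transpose_mat A3 = A3"
    and block: "transpose_mat W * A * W = four_block_mat (mat 1 1 (\<lambda>_. e)) (0\<^sub>m 1 m) (0\<^sub>m m 1) A3"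
    using real_symmetric_deflation[OF A sym v vv Av] by blast
  obtain Q3 D3 where Q3: "orthonormal_mat m Q3" and D3: "D3 \<in> carrier_mat m m"
    and dD3: "diagonal_mat D3" and A3eq: "A3 = Q3 * D3 * transpose_mat Q3"
    using Suc.IH[OF A3 A3sym] by blast
  define R where "R = four_block_mat (1\<^sub>m 1) (0\<^sub>m 1 m) (0\<^sub>m m 1) Q3"
  define D where "D = four_block_mat (mat 1 1 (\<lambda>_. e)) (0\<^sub>m 1 m) (0\<^sub>m m 1) D3"
  have R: "orthonormal_mat ?n R" unfolding R_def by (rule orthonormal_mat_one_block[OF Q3])
  have Q3c: "Q3 \<in> carrier_mat m m" and Wc: "W \<in> carrier_mat ?n ?n" and Rc: "R \<in> carrier_mat ?n ?n"
    and WWt: "W * transpose_mat W = 1\<^sub>m ?n"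
    using Q3 W R by (auto simp: orthonormal_mat_def)
  have D: "D \<in> carrier_mat ?n ?n"
    using four_block_carrier_mat[OF mat_carrier[of 1 1 "\<lambda>_. e"] D3] by (simp add: D_def)
  have Rt: "transpose_mat R = four_block_mat (1\<^sub>m 1) (0\<^sub>m 1 m) (0\<^sub>m m 1) (transpose_mat Q3)"
    unfolding R_def using Q3c by (subst transpose_four_block_mat) auto
  have RD: "R * D = four_block_mat (mat 1 1 (\<lambda>_. e)) (0\<^sub>m 1 m) (0\<^sub>m m 1) (Q3 * D3)"
    unfolding R_def D_def using Q3c D3
    by (subst mult_four_block_mat[of _ 1 1 _ m _ m _ _ 1 _ m]) auto
  have RDR: "R * D * transpose_mat R = transpose_mat W * A * W"
    unfolding block A3eq RD Rt using Q3c D3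
    by (subst mult_four_block_mat[of _ 1 1 _ m _ m _ _ 1 _ m]) auto
  have "A = (W * transpose_mat W) * A * (W * transpose_mat W)"
    using A WWt by simp
  also have "\<dots> = W * (transpose_mat W * A * W) * transpose_mat W"
    using A Wc by (simp add: assoc_mult_mat[of _ ?n ?n _ ?n _ ?n])
  also have "\<dots> = (W * R) * D * transpose_mat (W * R)"
    unfolding RDR[symmetric]
    using Wc Rc D by (simp add: transpose_mult[of _ ?n ?n] assoc_mult_mat[of _ ?n ?n _ ?n _ ?n])
  finally have "A = (W * R) * D * transpose_mat (W * R)" .
  moreover have "diagonal_mat D"
    using dD3 D3 unfolding diagonal_mat_def D_def
    by (auto simp: less_Suc_eq_0_disj) blast
  ultimately show ?case using orthonormal_mat_mult[OF W R] D by blast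
qed

section \<open>Eigenvalue bounds for quadratic forms\<close>

lemma proots_prod_linear_factors: "proots (\<Prod>a\<leftarrow>xs. [:- a, 1:]) = mset (xs :: real list)"
proof (induction xs)
  case (Cons a xs)
  have "(\<Prod>a\<leftarrow>xs. [:- a, 1::real:]) \<noteq> 0"
    by (auto simp: prod_list_zero_iff)
  then have "proots ([:- a, 1:] * (\<Prod>a\<leftarrow>xs. [:- a, 1::real:]))
      = proots [:- a, 1:] + proots (\<Prod>a\<leftarrow>xs. [:- a, 1::real:])"
    by (intro proots_mult) auto
  then show ?case using Cons proots_linear_factor[of "-a"] by simp
qed simp

lemma orthonormal_mat_scalar_prod:
  fixes Q :: "real mat"
  assumes Q: "orthonormal_mat n Q" and x: "x \<in> carrier_vec n" and y: "y \<in> carrier_vec n"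
  shows "(transpose_mat Q *\<^sub>v x) \<bullet> (transpose_mat Q *\<^sub>v y) = x \<bullet> y"
proof -
  have Qc: "Q \<in> carrier_mat n n" and QQt: "Q * transpose_mat Q = 1\<^sub>m n"
    using Q by (auto simp: orthonormal_mat_def)
  have "(transpose_mat Q *\<^sub>v x) \<bullet> (transpose_mat Q *\<^sub>v y) = x \<bullet> (Q *\<^sub>v (transpose_mat Q *\<^sub>v y))"
    using transpose_vec_mult_scalar[OF Qc _ x, of "transpose_mat Q *\<^sub>v y"] Qc y by simp
  also have "Q *\<^sub>v (transpose_mat Q *\<^sub>v y) = y"
    using Qc y QQt by (simp add: assoc_mult_mat_vec[symmetric, of _ n n _ n])
  finally show ?thesis .
qed

lemma real_symmetric_eigen_coordinates:
  fixes A :: "real mat"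
  assumes A: "A \<in> carrier_mat n n" and sym: "transpose_mat A = A"
  obtains Q d where "orthonormal_mat n Q"
    and "sorted_list_of_multiset (proots (char_poly A)) = sort (map d [0..<n])"
    and "\<And>x i. x \<in> carrier_vec n \<Longrightarrow> i < n \<Longrightarrow>
           (transpose_mat Q *\<^sub>v (A *\<^sub>v x)) $ i = d i * (transpose_mat Q *\<^sub>v x) $ i"
    and "\<And>x. x \<in> carrier_vec n \<Longrightarrow>
           x \<bullet> (A *\<^sub>v x) = (\<Sum>i<n. d i * ((transpose_mat Q *\<^sub>v x) $ i)^2)"
proof -
  obtain Q D where Q: "orthonormal_mat n Q" and D: "D \<in> carrier_mat n n" and dD: "diagonal_mat D"
    and AQ: "A = Q * D * transpose_mat Q"
    using real_symmetric_spectral[OF A sym] by blast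
  have Qc: "Q \<in> carrier_mat n n" and QtQ: "transpose_mat Q * Q = 1\<^sub>m n"
    and QQt: "Q * transpose_mat Q = 1\<^sub>m n"
    using Q by (auto simp: orthonormal_mat_def)
  define d where "d i = D $$ (i,i)" for i
  have "similar_mat A D"
    by (rule similar_matI[of A D Q "transpose_mat Q" n]) (use A D Qc QQt QtQ AQ in auto)
  then have "char_poly A = char_poly D" by (rule char_poly_similar)
  also have "\<dots> = (\<Prod>a\<leftarrow>diag_mat D. [:- a, 1:])"
    using char_poly_upper_triangular[OF D] dD D
    unfolding diagonal_mat_def upper_triangular_def by auto
  also have "diag_mat D = map d [0..<n]" using D by (simp add: diag_mat_def d_def)
  finally have "sorted_list_of_multiset (proots (char_poly A)) = sort (map d [0..<n])"
    by (simp only: proots_prod_linear_factors sorted_list_of_multiset_mset)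
  moreover have coord: "(transpose_mat Q *\<^sub>v (A *\<^sub>v x)) $ i = d i * (transpose_mat Q *\<^sub>v x) $ i"
    if x: "x \<in> carrier_vec n" and i: "i < n" for x i
  proof -
    define y where "y = transpose_mat Q *\<^sub>v x"
    have y: "y \<in> carrier_vec n" using Qc x by (simp add: y_def)
    have "transpose_mat Q *\<^sub>v (A *\<^sub>v x) = (transpose_mat Q * Q) *\<^sub>v (D *\<^sub>v y)"
      unfolding AQ y_def using Qc D x
      by (simp add: assoc_mult_mat_vec[of _ n n _ n] assoc_mult_mat[of _ n n _ n _ n])
    also have "\<dots> = D *\<^sub>v y" using QtQ D y by simp
    finally have "(transpose_mat Q *\<^sub>v (A *\<^sub>v x)) $ i = (\<Sum>j<n. D $$ (i,j) * y $ j)"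
      using i D y by (simp add: scalar_prod_def atLeast0LessThan)
    also have "\<dots> = (\<Sum>j<n. if j = i then d i * y $ j else 0)"
      using dD D i by (intro sum.cong refl) (auto simp: diagonal_mat_def d_def)
    finally show ?thesis using i by (simp add: y_def)
  qed
  moreover have "x \<bullet> (A *\<^sub>v x) = (\<Sum>i<n. d i * ((transpose_mat Q *\<^sub>v x) $ i)^2)"
    if x: "x \<in> carrier_vec n" for x
  proof -
    have "x \<bullet> (A *\<^sub>v x) = (transpose_mat Q *\<^sub>v x) \<bullet> (transpose_mat Q *\<^sub>v (A *\<^sub>v x))"
      using orthonormal_mat_scalar_prod[OF Q x, of "A *\<^sub>v x"] A x by simp
    also have "\<dots> = (\<Sum>i<n. (transpose_mat Q *\<^sub>v x) $ i * (d i * (transpose_mat Q *\<^sub>v x) $ i))"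
      using Qc x A coord[OF x] by (simp add: scalar_prod_def atLeast0LessThan)
    finally show ?thesis by (simp add: power2_eq_square mult_ac)
  qed
  ultimately show ?thesis using that Q by blast
qed

lemma sort_nth_last_ge:
  fixes xs :: "'a :: linorder list"
  assumes "i < length xs"
  shows "xs ! i \<le> sort xs ! (length xs - 1)"
proof -
  obtain j where j: "j < length xs" "sort xs ! j = xs ! i"
    using assms by (metis in_set_conv_nth length_sort nth_mem set_sort)
  then have "sort xs ! j \<le> sort xs ! (length xs - 1)"
    by (intro sorted_nth_mono) auto
  then show ?thesis using j by simp
qed

lemma sort_nth_1_le_max:
  fixes xs :: "'a :: linorder list"
  assumes i: "i < length xs" and k: "k < length xs" and ik: "i \<noteq> k"
  shows "sort xs ! 1 \<le> max (xs ! i) (xs ! k)"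
proof (rule ccontr)
  define m where "m = max (xs ! i) (xs ! k)"
  assume "\<not> sort xs ! 1 \<le> max (xs ! i) (xs ! k)"
  then have gt: "m < sort xs ! 1" unfolding m_def by (rule not_le_imp_less)
  \<comment> \<open>At most one entry of \<open>sort xs\<close>, but at least two of \<open>xs\<close>, lie below \<open>m\<close>.\<close>
  have "{j. j < length (sort xs) \<and> sort xs ! j \<le> m} \<subseteq> {0}"
  proof
    fix j assume j: "j \<in> {j. j < length (sort xs) \<and> sort xs ! j \<le> m}"
    show "j \<in> {0}"
    proof (rule ccontr)
      assume "j \<notin> {0}"
      then have "sort xs ! 1 \<le> sort xs ! j" using j by (intro sorted_nth_mono) auto
      then show False using gt j order_less_le_trans[of m "sort xs ! 1" "sort xs ! j"] leD by blast
    qed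
  qed
  then have "length (filter (\<lambda>y. y \<le> m) (sort xs)) \<le> card {0::nat}"
    unfolding length_filter_conv_card by (intro card_mono) auto
  moreover have "length (filter (\<lambda>y. y \<le> m) (sort xs)) = length (filter (\<lambda>y. y \<le> m) xs)"
    by (metis mset_filter mset_sort size_mset)
  moreover have "card {i, k} \<le> card {j. j < length xs \<and> xs ! j \<le> m}"
    using i k by (intro card_mono) (auto simp: m_def)
  ultimately show False using ik by (simp add: length_filter_conv_card)
qed

lemma sort_nth_1_le_off_argmin:
  fixes d :: "nat \<Rightarrow> 'a :: linorder"
  assumes n: "2 \<le> n"
  obtains k where "k < n" and "\<And>i. i < n \<Longrightarrow> i \<noteq> k \<Longrightarrow> sort (map d [0..<n]) ! 1 \<le> d i"
proof -
  have "Min (d ` {..<n}) \<in> d ` {..<n}" using n by (intro Min_in) (auto simp: lessThan_empty_iff)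
  then obtain k where k: "k < n" "d k = Min (d ` {..<n})" by auto
  show ?thesis
  proof (rule that[OF k(1)])
    fix i assume i: "i < n" "i \<noteq> k"
    have "sort (map d [0..<n]) ! 1 \<le> max (d i) (d k)"
      using sort_nth_1_le_max[of i "map d [0..<n]" k] i k(1) by simp
    moreover have "d k \<le> d i" using i k by simp
    ultimately show "sort (map d [0..<n]) ! 1 \<le> d i" by (simp add: max_def)
  qed
qed

lemma quadratic_form_le_eigval_max:
  fixes A :: "real mat"
  assumes A: "A \<in> carrier_mat n n" and sym: "transpose_mat A = A" and n: "n > 0"
    and x: "x \<in> carrier_vec n"
  shows "x \<bullet> (A *\<^sub>v x) \<le> eigval A n * (x \<bullet> x)"
proof -
  obtain Q d where Q: "orthonormal_mat n Q"
    and cp: "sorted_list_of_multiset (proots (char_poly A)) = sort (map d [0..<n])"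
    and "\<And>z i. z \<in> carrier_vec n \<Longrightarrow> i < n \<Longrightarrow>
      (transpose_mat Q *\<^sub>v (A *\<^sub>v z)) $ i = d i * (transpose_mat Q *\<^sub>v z) $ i"
    and quad: "\<And>x. x \<in> carrier_vec n \<Longrightarrow>
      x \<bullet> (A *\<^sub>v x) = (\<Sum>i<n. d i * ((transpose_mat Q *\<^sub>v x) $ i)^2)"
    using real_symmetric_eigen_coordinates[OF A sym] by blast
  define M where "M = eigval A n"
  have dM: "d i \<le> M" if "i < n" for i
    using sort_nth_last_ge[of i "map d [0..<n]"] that by (simp add: M_def eigval_def cp)
  define y where "y = transpose_mat Q *\<^sub>v x"
  have y: "y \<in> carrier_vec n" using Q x by (auto simp: y_def orthonormal_mat_def)
  have "x \<bullet> (A *\<^sub>v x) = (\<Sum>i<n. d i * (y $ i)^2)" using quad[OF x] by (simp add: y_def)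
  also have "\<dots> \<le> (\<Sum>i<n. M * (y $ i)^2)"
    by (intro sum_mono mult_right_mono) (auto simp: dM)
  also have "\<dots> = M * (x \<bullet> x)"
    using scalar_prod_self_eq_sum_squares[OF y] orthonormal_mat_scalar_prod[OF Q x x]
    by (simp add: sum_distrib_left y_def)
  finally show ?thesis by (simp add: M_def)
qed

lemma eigval_2_le_quadratic_form:
  fixes A :: "real mat"
  assumes A: "A \<in> carrier_mat n n" and sym: "transpose_mat A = A" and n: "n \<ge> 2"
    and psd: "\<And>z. z \<in> carrier_vec n \<Longrightarrow> z \<bullet> (A *\<^sub>v z) \<ge> 0"
    and J: "J \<in> carrier_vec n" "J \<noteq> 0\<^sub>v n" and AJ: "A *\<^sub>v J = 0\<^sub>v n"
    and x: "x \<in> carrier_vec n" and xJ: "x \<bullet> J = 0"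
  shows "eigval A 2 * (x \<bullet> x) \<le> x \<bullet> (A *\<^sub>v x)"
proof -
  obtain Q d where Q: "orthonormal_mat n Q"
    and cp: "sorted_list_of_multiset (proots (char_poly A)) = sort (map d [0..<n])"
    and coord: "\<And>z i. z \<in> carrier_vec n \<Longrightarrow> i < n \<Longrightarrow>
      (transpose_mat Q *\<^sub>v (A *\<^sub>v z)) $ i = d i * (transpose_mat Q *\<^sub>v z) $ i"
    and quad: "\<And>z. z \<in> carrier_vec n \<Longrightarrow>
      z \<bullet> (A *\<^sub>v z) = (\<Sum>i<n. d i * ((transpose_mat Q *\<^sub>v z) $ i)^2)"
    using real_symmetric_eigen_coordinates[OF A sym] by blast
  have Qt: "transpose_mat Q \<in> carrier_mat n n" using Q by (simp add: orthonormal_mat_def)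
  define l where "l = eigval A 2"
  obtain k where k: "k < n" and dl: "\<And>i. i < n \<Longrightarrow> i \<noteq> k \<Longrightarrow> l \<le> d i"
    using sort_nth_1_le_off_argmin[OF n, of d] by (auto simp: l_def eigval_def cp)
  show ?thesis
  proof (cases "l \<le> 0")
    case True
    then show ?thesis
      using psd[OF x] scalar_prod_self_nonneg[of x] by (metis l_def mult_nonpos_nonneg order_trans)
  next
    case False
    \<comment> \<open>In eigencoordinates \<open>J\<close> lies in the eigenspace of \<open>d k\<close> alone, since all other
      eigenvalues are at least \<open>l > 0\<close>; orthogonality to \<open>J\<close> then kills the \<open>k\<close>-th coordinate of \<open>x\<close>.\<close>
    define j where "j = transpose_mat Q *\<^sub>v J"
    define y where "y = transpose_mat Q *\<^sub>v x"
    have jy: "j \<in> carrier_vec n" "y \<in> carrier_vec n" using Qt J x by (simp_all add: j_def y_def)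
    have j0: "j $ i = 0" if "i < n" "i \<noteq> k" for i
      using coord[OF J(1) that(1)] that(1) Qt AJ dl[OF that] False by (simp add: j_def)
    have "j \<bullet> j \<noteq> 0"
      using orthonormal_mat_scalar_prod[OF Q J(1) J(1)] conjugate_square_eq_0_vec[OF J(1)] J(2)
      by (simp add: j_def)
    then have jk: "j $ k \<noteq> 0"
      using jy(1) j0 k by (auto simp: scalar_prod_def atLeast0LessThan intro!: sum.neutral) (metis)
    have "(\<Sum>i\<in>{..<n} - {k}. y $ i * j $ i) = 0"
      using j0 by (intro sum.neutral) auto
    then have "y \<bullet> j = y $ k * j $ k"
      using jy k by (simp add: scalar_prod_def atLeast0LessThan sum.remove)
    moreover have "y \<bullet> j = 0"
      using orthonormal_mat_scalar_prod[OF Q x J(1)] xJ by (simp add: y_def j_def)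
    ultimately have yk: "y $ k = 0" using k jk by simp
    have "l * (x \<bullet> x) = (\<Sum>i<n. l * (y $ i)^2)"
      using scalar_prod_self_eq_sum_squares[OF jy(2)] orthonormal_mat_scalar_prod[OF Q x x]
      by (simp add: sum_distrib_left y_def)
    also have "\<dots> \<le> (\<Sum>i<n. d i * (y $ i)^2)"
    proof (intro sum_mono)
      fix i assume "i \<in> {..<n}"
      then show "l * (y $ i)^2 \<le> d i * (y $ i)^2"
        using dl[of i] yk by (cases "i = k") (auto intro: mult_right_mono)
    qed
    also have "\<dots> = x \<bullet> (A *\<^sub>v x)" using quad[OF x] by (simp add: y_def)
    finally show ?thesis by (simp add: l_def)
  qed
qed

section \<open>The hypergraph Laplacian\<close>

lemma hypergraph_finite_edges: "hypergraph n E \<Longrightarrow> finite E"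
  unfolding hypergraph_def by (rule finite_subset[of _ "Pow {0..<n}"]) auto

lemma hypergraph_edgeD:
  assumes "hypergraph n E" and "e \<in> E"
  shows "e \<subseteq> {0..<n}" and "card e \<ge> 2" and "finite e"
  using assms finite_subset[of e "{0..<n}"] by (auto simp: hypergraph_def)

lemma hlaplacian_carrier: "hlaplacian n E \<in> carrier_mat n n"
  by (simp add: hlaplacian_def)

lemma hlaplacian_symmetric: "transpose_mat (hlaplacian n E) = hlaplacian n E"
  by (rule eq_matI) (auto simp: hlaplacian_def conj_commute)

definition edge_laplacian :: "nat set \<Rightarrow> nat \<Rightarrow> nat \<Rightarrow> real" where
  "edge_laplacian e i j =
     (if i \<in> e \<and> j \<in> e then if i = j then 1 else - 1 / (real (card e) - 1) else 0)"

lemma index_hlaplacian: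
  assumes "finite E" and "i < n" and "j < n"
  shows "hlaplacian n E $$ (i,j) = (\<Sum>e\<in>E. edge_laplacian e i j)"
proof (cases "i = j")
  case True
  have "real (hdegree E i) = (\<Sum>e\<in>{e\<in>E. i \<in> e}. 1)" by (simp add: hdegree_def)
  also have "\<dots> = (\<Sum>e\<in>E. if i \<in> e then 1 else 0)"
    using assms(1) by (rule sum.inter_filter)
  also have "\<dots> = (\<Sum>e\<in>E. edge_laplacian e i j)"
    using True by (intro sum.cong) (auto simp: edge_laplacian_def)
  finally show ?thesis using True assms by (simp add: hlaplacian_def)
next
  case False
  have "- (\<Sum>e\<in>{e\<in>E. i \<in> e \<and> j \<in> e}. 1 / (real (card e) - 1))
      = (\<Sum>e\<in>{e\<in>E. i \<in> e \<and> j \<in> e}. - 1 / (real (card e) - 1))"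
    by (simp add: sum_negf)
  also have "\<dots> = (\<Sum>e\<in>E. if i \<in> e \<and> j \<in> e then - 1 / (real (card e) - 1) else 0)"
    using assms(1) by (rule sum.inter_filter)
  also have "\<dots> = (\<Sum>e\<in>E. edge_laplacian e i j)"
    using False by (intro sum.cong) (auto simp: edge_laplacian_def)
  finally show ?thesis using False assms by (simp add: hlaplacian_def)
qed

definition edge_energy :: "nat set \<Rightarrow> real vec \<Rightarrow> real" where
  "edge_energy e x =
     (real (card e) * (\<Sum>i\<in>e. (x $ i)^2) - (\<Sum>i\<in>e. x $ i)^2) / (real (card e) - 1)"

lemma sum_lessThan_restrict:
  fixes n :: nat
  assumes "e \<subseteq> {..<n}" and "\<And>i. i \<notin> e \<Longrightarrow> f i = 0"
  shows "(\<Sum>i<n. f i) = (\<Sum>i\<in>e. f i)"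
  using assms by (intro sum.mono_neutral_right) auto

lemma edge_laplacian_quadratic_form:
  assumes e: "e \<subseteq> {0..<n}" and ce: "card e \<ge> 2"
  shows "(\<Sum>i<n. \<Sum>j<n. x $ i * x $ j * edge_laplacian e i j) = edge_energy e x"
proof -
  define c where "c = 1 / (real (card e) - 1)"
  have e': "e \<subseteq> {..<n}" using e by auto
  have fin: "finite e" using e finite_subset by blast
  have "(\<Sum>i<n. \<Sum>j<n. x $ i * x $ j * edge_laplacian e i j)
      = (\<Sum>i\<in>e. \<Sum>j\<in>e. x $ i * x $ j * edge_laplacian e i j)"
    using e' by (simp add: sum_lessThan_restrict[of e n] edge_laplacian_def)
  also have "\<dots> = (\<Sum>i\<in>e. \<Sum>j\<in>e. (1 + c) * (if i = j then (x $ i)^2 else 0) - c * (x $ i * x $ j))"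
    by (intro sum.cong refl) (auto simp: edge_laplacian_def c_def power2_eq_square field_simps)
  also have "\<dots> = (1 + c) * (\<Sum>i\<in>e. \<Sum>j\<in>e. if i = j then (x $ i)^2 else 0)
      - c * (\<Sum>i\<in>e. \<Sum>j\<in>e. x $ i * x $ j)"
    by (simp add: sum_subtractf sum_distrib_left)
  also have "\<dots> = (1 + c) * (\<Sum>i\<in>e. (x $ i)^2) - c * (\<Sum>i\<in>e. x $ i)^2"
    using fin by (simp add: power2_eq_square sum_product)
  also have "\<dots> = edge_energy e x"
    using ce by (simp add: edge_energy_def c_def divide_simps)
  finally show ?thesis .
qed

lemma hlaplacian_quadratic_form:
  assumes hg: "hypergraph n E" and x: "x \<in> carrier_vec n"
  shows "x \<bullet> (hlaplacian n E *\<^sub>v x) = (\<Sum>e\<in>E. edge_energy e x)"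
proof -
  have fin: "finite E" using hypergraph_finite_edges[OF hg] .
  have "x \<bullet> (hlaplacian n E *\<^sub>v x) = (\<Sum>i<n. \<Sum>j<n. \<Sum>e\<in>E. x $ i * x $ j * edge_laplacian e i j)"
    using x hlaplacian_carrier[of n E]
    by (simp add: scalar_prod_def atLeast0LessThan index_hlaplacian[OF fin]
        sum_distrib_left sum_distrib_right mult_ac)
  also have "\<dots> = (\<Sum>e\<in>E. \<Sum>i<n. \<Sum>j<n. x $ i * x $ j * edge_laplacian e i j)"
    by (simp add: sum.swap[of _ E])
  also have "\<dots> = (\<Sum>e\<in>E. edge_energy e x)"
    using hypergraph_edgeD[OF hg] by (intro sum.cong refl edge_laplacian_quadratic_form) auto
  finally show ?thesis .
qed

lemma edge_energy_nonneg:
  assumes "finite e" and "card e \<ge> 2"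
  shows "edge_energy e x \<ge> 0"
proof -
  define K where "K = real (card e)"
  define Sx where "Sx = (\<Sum>i\<in>e. x $ i)"
  define Sq where "Sq = (\<Sum>i\<in>e. (x $ i)^2)"
  have "(\<Sum>i\<in>e. \<Sum>j\<in>e. (x $ i - x $ j)^2)
      = (\<Sum>i\<in>e. \<Sum>j\<in>e. (x $ i)^2 + (x $ j)^2 - 2 * (x $ i * x $ j))"
    by (intro sum.cong refl) (simp add: power2_eq_square algebra_simps)
  also have "\<dots> = (\<Sum>i\<in>e. K * (x $ i)^2 + Sq - 2 * (x $ i * Sx))"
    by (intro sum.cong refl) (simp add: sum.distrib sum_subtractf sum_distrib_left K_def Sq_def Sx_def)
  also have "\<dots> = 2 * (K * Sq - Sx^2)"
    by (simp add: sum.distrib sum_subtractf sum_distrib_left[symmetric]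
        sum_distrib_right[symmetric] K_def Sq_def Sx_def power2_eq_square)
  finally have "(\<Sum>i\<in>e. \<Sum>j\<in>e. (x $ i - x $ j)^2) = 2 * (K * Sq - Sx^2)" .
  moreover have "(\<Sum>i\<in>e. \<Sum>j\<in>e. (x $ i - x $ j)^2) \<ge> 0" by (intro sum_nonneg) auto
  ultimately have "K * Sq - Sx^2 \<ge> 0" by simp
  moreover have "K - 1 > 0" using assms by (simp add: K_def)
  ultimately show ?thesis by (simp add: edge_energy_def K_def Sx_def Sq_def)
qed

lemma hlaplacian_psd:
  assumes "hypergraph n E" and "x \<in> carrier_vec n"
  shows "x \<bullet> (hlaplacian n E *\<^sub>v x) \<ge> 0"
  unfolding hlaplacian_quadratic_form[OF assms]
  using hypergraph_edgeD[OF assms(1)] by (intro sum_nonneg edge_energy_nonneg) auto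

lemma hlaplacian_mult_ones:
  assumes hg: "hypergraph n E"
  shows "hlaplacian n E *\<^sub>v vec n (\<lambda>_. 1) = 0\<^sub>v n"
proof (rule eq_vecI)
  fix i assume "i < dim_vec (0\<^sub>v n :: real vec)"
  then have i: "i < n" by simp
  \<comment> \<open>Each edge through \<open>i\<close> contributes \<open>1 - (|e| - 1) / (|e| - 1) = 0\<close> to the row sum.\<close>
  have row: "(\<Sum>j<n. edge_laplacian e i j) = 0" if "e \<in> E" for e
  proof -
    have e: "e \<subseteq> {..<n}" "finite e" "card e \<ge> 2" using hypergraph_edgeD[OF hg that] by auto
    have "(\<Sum>j<n. edge_laplacian e i j) = (\<Sum>j\<in>e. edge_laplacian e i j)"
      using e by (intro sum_lessThan_restrict) (auto simp: edge_laplacian_def)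
    also have "\<dots> = 0"
    proof (cases "i \<in> e")
      case True
      have "(\<Sum>j\<in>e. edge_laplacian e i j) = 1 + (\<Sum>j\<in>e - {i}. - 1 / (real (card e) - 1))"
        using True e by (simp add: sum.remove edge_laplacian_def)
      then show ?thesis using True e by (simp add: of_nat_diff)
    qed (simp add: edge_laplacian_def)
    finally show ?thesis .
  qed
  have "(hlaplacian n E *\<^sub>v vec n (\<lambda>_. 1)) $ i = (\<Sum>e\<in>E. \<Sum>j<n. edge_laplacian e i j)"
    using i hlaplacian_carrier[of n E]
    by (simp add: scalar_prod_def atLeast0LessThan index_hlaplacian[OF hypergraph_finite_edges[OF hg]]
        sum.swap[of _ E])
  then show "(hlaplacian n E *\<^sub>v vec n (\<lambda>_. 1)) $ i = 0\<^sub>v n $ i"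
    using row i by simp
qed (simp add: hlaplacian_def)

section \<open>Cut weights\<close>

definition cut_weight :: "nat set \<Rightarrow> nat set \<Rightarrow> real" where
  "cut_weight S e = real (card (e \<inter> S)) * real (card (e - S)) / (real (card e) - 1)"

lemma sum_if_mem_split:
  fixes a b :: real
  assumes "finite A"
  shows "(\<Sum>i\<in>A. if i \<in> S then a else b) = real (card (A \<inter> S)) * a + real (card (A - S)) * b"
  using sum.If_cases[OF assms, of "\<lambda>i. i \<in> S" "\<lambda>_. a" "\<lambda>_. b"] by (simp add: Diff_eq)

lemma edge_energy_cut_vector:
  assumes e: "e \<subseteq> {0..<n}"
  shows "edge_energy e (vec n (\<lambda>i. if i \<in> S then p else - q)) = (p + q)^2 * cut_weight S e"
proof -
  have fin: "finite e" using e finite_subset by blast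
  define a where "a = real (card (e \<inter> S))"
  define b where "b = real (card (e - S))"
  have k: "real (card e) = a + b" using card_Int_Diff[OF fin, of S] by (simp add: a_def b_def)
  have xi: "vec n (\<lambda>i. if i \<in> S then p else - q) $ i = (if i \<in> S then p else - q)" if "i \<in> e" for i
    using that e by auto
  have s1: "(\<Sum>i\<in>e. vec n (\<lambda>i. if i \<in> S then p else - q) $ i) = a * p - b * q"
    using sum_if_mem_split[OF fin, of S p "- q"] by (simp add: xi a_def b_def)
  have "(\<Sum>i\<in>e. (vec n (\<lambda>i. if i \<in> S then p else - q) $ i)^2)
      = (\<Sum>i\<in>e. if i \<in> S then p^2 else q^2)"
    by (intro sum.cong refl) (simp add: xi)
  then have s2: "(\<Sum>i\<in>e. (vec n (\<lambda>i. if i \<in> S then p else - q) $ i)^2) = a * p^2 + b * q^2"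
    using sum_if_mem_split[OF fin, of S "p^2" "q^2"] by (simp add: a_def b_def)
  have "(a + b) * (a * p^2 + b * q^2) - (a * p - b * q)^2 = a * b * (p + q)^2"
    by (simp add: power2_eq_square algebra_simps)
  then show ?thesis
    unfolding edge_energy_def cut_weight_def s1 s2 k by (simp add: a_def b_def)
qed

lemma cut_vector_scalar_prods:
  fixes p q :: real
  assumes "S \<subseteq> {0..<n}"
  defines "x \<equiv> vec n (\<lambda>i. if i \<in> S then p else - q)"
  shows "x \<bullet> vec n (\<lambda>_. 1) = real (card S) * p - real (card ({0..<n} - S)) * q"
    and "x \<bullet> x = real (card S) * p^2 + real (card ({0..<n} - S)) * q^2"
proof -
  have S: "{0..<n} \<inter> S = S" using assms(1) by auto
  show "x \<bullet> vec n (\<lambda>_. 1) = real (card S) * p - real (card ({0..<n} - S)) * q"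
    using sum_if_mem_split[of "{0..<n}" S p "- q"] S
    unfolding scalar_prod_def by (simp add: x_def)
  have "x \<bullet> x = (\<Sum>i\<in>{0..<n}. if i \<in> S then p^2 else q^2)"
    unfolding scalar_prod_def by (intro sum.cong) (auto simp: x_def power2_eq_square)
  then show "x \<bullet> x = real (card S) * p^2 + real (card ({0..<n} - S)) * q^2"
    using sum_if_mem_split[of "{0..<n}" S "p^2" "q^2"] S by simp
qed

lemma cut_weight_ge_one:
  assumes "finite e" and "e \<inter> S \<noteq> {}" and "e - S \<noteq> {}"
  shows "cut_weight S e \<ge> 1"
proof -
  define a where "a = real (card (e \<inter> S))"
  define b where "b = real (card (e - S))"
  have ab: "a \<ge> 1" "b \<ge> 1" using assms by (auto simp: a_def b_def Suc_le_eq card_gt_0_iff)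
  have "real (card e) = a + b" using card_Int_Diff[OF assms(1), of S] by (simp add: a_def b_def)
  moreover have "(a - 1) * (b - 1) \<ge> 0" using ab by simp
  then have "a * b \<ge> a + b - 1" by (simp add: algebra_simps)
  ultimately show ?thesis using ab by (simp add: cut_weight_def a_def b_def)
qed

lemma cut_weight_le:
  assumes fin: "finite e" and c: "2 \<le> c" "c \<le> card e" and r: "card e \<le> r"
  shows "cut_weight S e \<le> real (r^2 div 4) / (real c - 1)"
proof -
  define a where "a = card (e \<inter> S)"
  define b where "b = card (e - S)"
  have "card e = a + b" using card_Int_Diff[OF fin, of S] by (simp add: a_def b_def)
  have "4 * (a * b) \<le> (a + b)^2"
  proof -
    have "4 * (int a * int b) \<le> (int a + int b)^2"
      using zero_le_power2[of "int a - int b"] by (simp add: power2_eq_square algebra_simps)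
    then show ?thesis by (simp flip: of_nat_mult of_nat_add of_nat_power)
  qed
  then have "a * b \<le> (a + b)^2 div 4" by simp
  also have "\<dots> \<le> r^2 div 4"
    using r \<open>card e = a + b\<close> by (intro div_le_mono power_mono) auto
  finally have ab: "real a * real b \<le> real (r^2 div 4)" by (simp flip: of_nat_mult)
  have "cut_weight S e = real a * real b / (real (card e) - 1)" by (simp add: cut_weight_def a_def b_def)
  also have "\<dots> \<le> real a * real b / (real c - 1)"
    using c by (intro divide_left_mono) auto
  also have "\<dots> \<le> real (r^2 div 4) / (real c - 1)"
    using ab c by (intro divide_right_mono) auto
  finally show ?thesis .
qed

lemma cut_weight_eq_0:
  assumes "e \<inter> S = {} \<or> e - S = {}"
  shows "cut_weight S e = 0"
  using assms by (metis cut_weight_def card.empty of_nat_0 mult_zero_left mult_zero_right div_0)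

lemma edge_boundary_eq:
  assumes "hypergraph n E"
  shows "edge_boundary n E S = {e \<in> E. e \<inter> S \<noteq> {} \<and> e - S \<noteq> {}}"
  using hypergraph_edgeD(1)[OF assms] by (auto simp: edge_boundary_def)

lemma sum_cut_weight_edge_boundary:
  assumes "hypergraph n E"
  shows "(\<Sum>e\<in>E. cut_weight S e) = (\<Sum>e\<in>edge_boundary n E S. cut_weight S e)"
proof (rule sum.mono_neutral_right)
  show "\<forall>e\<in>E - edge_boundary n E S. cut_weight S e = 0"
    using cut_weight_eq_0 by (auto simp: edge_boundary_eq[OF assms])
qed (use hypergraph_finite_edges[OF assms] in \<open>auto simp: edge_boundary_def\<close>)

lemma card_edge_boundary_le_sum_cut_weight:
  assumes hg: "hypergraph n E"
  shows "real (card (edge_boundary n E S)) \<le> (\<Sum>e\<in>E. cut_weight S e)"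
  unfolding sum_cut_weight_edge_boundary[OF hg] real_of_card
  using hypergraph_edgeD(3)[OF hg]
  by (intro sum_mono cut_weight_ge_one) (auto simp: edge_boundary_eq[OF hg])

lemma hcorank_le_card:
  assumes "hypergraph n E" and "e \<in> E"
  shows "hcorank E \<le> card e"
  using assms hypergraph_finite_edges by (auto simp: hcorank_def)

lemma card_le_hrank:
  assumes "hypergraph n E" and "e \<in> E"
  shows "card e \<le> hrank E"
  using assms hypergraph_finite_edges by (auto simp: hrank_def)

lemma two_le_hcorank:
  assumes hg: "hypergraph n E" and "E \<noteq> {}"
  shows "2 \<le> hcorank E"
proof -
  have "hcorank E \<in> card ` E"
    unfolding hcorank_def using hypergraph_finite_edges[OF hg] assms(2) by (intro Min_in) auto
  then show ?thesis using hypergraph_edgeD(2)[OF hg] by auto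
qed

lemma sum_cut_weight_le_card_edge_boundary:
  assumes hg: "hypergraph n E" and E: "E \<noteq> {}"
  shows "(\<Sum>e\<in>E. cut_weight S e)
    \<le> real (card (edge_boundary n E S)) * (real (hrank E ^ 2 div 4) / (real (hcorank E) - 1))"
proof -
  have "cut_weight S e \<le> real (hrank E ^ 2 div 4) / (real (hcorank E) - 1)" if "e \<in> E" for e
    using hypergraph_edgeD(3)[OF hg that] two_le_hcorank[OF hg E] hcorank_le_card[OF hg that]
      card_le_hrank[OF hg that]
    by (rule cut_weight_le)
  then show ?thesis
    unfolding sum_cut_weight_edge_boundary[OF hg]
    using sum_mono[of "edge_boundary n E S" "cut_weight S"
        "\<lambda>_. real (hrank E ^ 2 div 4) / (real (hcorank E) - 1)"]
    by (auto simp: edge_boundary_def)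
qed

lemma eigval_zero_mat:
  assumes "1 \<le> k" and "k \<le> n"
  shows "eigval (0\<^sub>m n n :: real mat) k = 0"
proof -
  have "char_poly (0\<^sub>m n n :: real mat) = (\<Prod>a\<leftarrow>diag_mat (0\<^sub>m n n). [:- a, 1:])"
    by (rule char_poly_upper_triangular) (auto simp: upper_triangular_def)
  also have "diag_mat (0\<^sub>m n n :: real mat) = replicate n 0"
    by (intro nth_equalityI) (auto simp: diag_mat_def)
  finally have "sorted_list_of_multiset (proots (char_poly (0\<^sub>m n n :: real mat))) = sort (replicate n 0)"
    by (simp only: proots_prod_linear_factors sorted_list_of_multiset_mset)
  also have "sort (replicate n (0::real)) = replicate n 0" by (rule sorted_sort_id) simp
  finally show ?thesis using assms by (simp add: eigval_def)
qed

lemma hlaplacian_empty: "hlaplacian n {} = 0\<^sub>m n n"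
  by (rule eq_matI) (auto simp: hlaplacian_def hdegree_def)

lemma two_le_if_nonempty_psubset:
  fixes n :: nat
  assumes "S \<noteq> {}" and "S \<subset> {0..<n}"
  shows "2 \<le> n"
proof -
  have "card S < n" using psubset_card_mono[OF _ assms(2)] by simp
  moreover have "card S \<noteq> 0" using assms finite_subset[of S "{0..<n}"] by auto
  ultimately show ?thesis by linarith
qed

lemma hlaplacian_cut_bounds:
  assumes hg: "hypergraph n E" and S: "S \<noteq> {}" "S \<subset> {0..<n}"
  shows "eigval (hlaplacian n E) 2 * real (card S) * real (card ({0..<n} - S)) / real n
      \<le> (\<Sum>e\<in>E. cut_weight S e)"
    and "(\<Sum>e\<in>E. cut_weight S e)
      \<le> eigval (hlaplacian n E) n * real (card S) * real (card ({0..<n} - S)) / real n"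
proof -
  let ?L = "hlaplacian n E"
  define s where "s = real (card S)"
  define s' where "s' = real (card ({0..<n} - S))"
  define W where "W = (\<Sum>e\<in>E. cut_weight S e)"
  define x where "x = vec n (\<lambda>i. if i \<in> S then s' else - s)"
  define one :: "real vec" where "one = vec n (\<lambda>_. 1)"
  have n2: "2 \<le> n" by (rule two_le_if_nonempty_psubset[OF S])
  have ns: "real n = s + s'"
    using card_Int_Diff[of "{0..<n}" S] S(2) by (simp add: s_def s'_def Int_absorb1)
  have x: "x \<in> carrier_vec n" by (simp add: x_def)
  have "one $ 0 \<noteq> 0\<^sub>v n $ 0" using n2 by (simp add: one_def)
  then have one: "one \<in> carrier_vec n" "one \<noteq> 0\<^sub>v n" by (auto simp: one_def)
  have x_one: "x \<bullet> one = 0" and xx: "x \<bullet> x = s * s' * real n"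
    using cut_vector_scalar_prods[of S n s' s] S(2)
    by (auto simp: x_def one_def s_def s'_def ns power2_eq_square algebra_simps)
  have "x \<bullet> (?L *\<^sub>v x) = (\<Sum>e\<in>E. edge_energy e x)"
    by (rule hlaplacian_quadratic_form[OF hg x])
  also have "\<dots> = (\<Sum>e\<in>E. real n ^ 2 * cut_weight S e)"
    unfolding x_def using hypergraph_edgeD(1)[OF hg]
    by (intro sum.cong refl) (simp add: edge_energy_cut_vector ns add.commute)
  finally have xLx: "x \<bullet> (?L *\<^sub>v x) = real n ^ 2 * W"
    by (simp add: W_def sum_distrib_left)
  have "eigval ?L 2 * (x \<bullet> x) \<le> x \<bullet> (?L *\<^sub>v x)"
    using eigval_2_le_quadratic_form[OF hlaplacian_carrier hlaplacian_symmetric n2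
        hlaplacian_psd[OF hg] one hlaplacian_mult_ones[OF hg, folded one_def] x x_one] .
  then have "real n * (eigval ?L 2 * s * s') \<le> real n * (real n * W)"
    unfolding xx xLx by (simp add: power2_eq_square mult_ac)
  then show "eigval ?L 2 * real (card S) * real (card ({0..<n} - S)) / real n \<le> W"
    using n2 by (simp add: s_def s'_def field_simps)
  have "x \<bullet> (?L *\<^sub>v x) \<le> eigval ?L n * (x \<bullet> x)"
    using n2 by (intro quadratic_form_le_eigval_max[OF hlaplacian_carrier hlaplacian_symmetric _ x]) simp
  then have "real n * (real n * W) \<le> real n * (eigval ?L n * s * s')"
    unfolding xx xLx by (simp add: power2_eq_square mult_ac)
  then show "W \<le> eigval ?L n * real (card S) * real (card ({0..<n} - S)) / real n"
    using n2 by (simp add: s_def s'_def field_simps)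
qed

theorem theorem6:
  fixes n :: nat and E :: "nat set set" and S :: "nat set"
  assumes "hypergraph n E"
    and "S \<noteq> {}" and "S \<subset> {0..<n}"
  shows "(real (hrank E) - 1) * (eigval (hlaplacian n E) n * real (card S) * real (card ({0..<n} - S)) / real n)
           \<ge> real (card (edge_boundary n E S))
       \<and> real (card (edge_boundary n E S))
           \<ge> (real (hcorank E) - 1) / real (hrank E ^ 2 div 4)
             * (eigval (hlaplacian n E) 2 * real (card S) * real (card ({0..<n} - S)) / real n)"
proof (cases "E = {}")
  case True
  have "2 \<le> n" by (rule two_le_if_nonempty_psubset[OF assms(2,3)])
  then show ?thesis using True by (simp add: hlaplacian_empty eigval_zero_mat edge_boundary_def)
next
  case False
  let ?B = "real (card (edge_boundary n E S))"
  let ?W = "\<Sum>e\<in>E. cut_weight S e"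
  let ?lo = "eigval (hlaplacian n E) 2 * real (card S) * real (card ({0..<n} - S)) / real n"
  let ?up = "eigval (hlaplacian n E) n * real (card S) * real (card ({0..<n} - S)) / real n"
  have bounds: "?lo \<le> ?W" "?W \<le> ?up" "?B \<le> ?W"
    using hlaplacian_cut_bounds[OF assms] card_edge_boundary_le_sum_cut_weight[OF assms(1)] by auto
  obtain e where e: "e \<in> E" using False by blast
  have c: "2 \<le> hcorank E" and r: "2 \<le> hrank E"
    using two_le_hcorank[OF assms(1) False] hcorank_le_card[OF assms(1) e] card_le_hrank[OF assms(1) e]
    by auto
  have F: "real (hrank E ^ 2 div 4) \<ge> 1"
    using r power_mono[of 2 "hrank E" 2] by simp
  have "(real (hrank E) - 1) * ?up \<ge> 1 * ?up"
    using r bounds by (intro mult_right_mono) auto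
  then have up: "?B \<le> (real (hrank E) - 1) * ?up" using bounds by linarith
  have "(real (hcorank E) - 1) / real (hrank E ^ 2 div 4) * ?lo
      \<le> (real (hcorank E) - 1) / real (hrank E ^ 2 div 4) * ?W"
    using bounds c F by (intro mult_left_mono) auto
  also have "\<dots> \<le> ?B"
    using sum_cut_weight_le_card_edge_boundary[OF assms(1) False, of S] c F
    by (simp add: field_simps)
  finally show ?thesis using up by simp
qed

end
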